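(* Let $\alpha$ be irrational with convergents $p_k/q_k$. For integers $k \ge 1$ and $0 \le M <q_k$ define \[ B_{k,M}(x)= \log \frac{P_M (\alpha, (-1)^k x/q_k)}{P_M (p_k/q_k, (-1)^k x/q_k)} - \sum_{n=1}^M \sin (\pi n \| q_k \alpha \| /q_k ) \cot \left( \pi \frac{n (-1)^k p_k+x}{q_k} \right) . \] Then \[ \log P_{q_k}(\alpha, (-1)^k x/q_k) = \log \left( |2 \sin (\pi (\| q_k \alpha \| + x/q_k))| \frac{|\sin (\pi x)|}{|\sin (\pi x/q_k)|} \right) + V_k (x) + B_{k,q_k-1}(x) , \] with the convention $|\sin (\pi x)| / |\sin (\pi x /q_k)| =q_k$ when $x/q_k \in \mathbb{Z}$.
   Context: $P_N(\beta,x)=\prod_{n=1}^N|2\sin(\pi(n\beta+x))|$. $p_k/q_k=[a_0;a_1,\dots,a_k]$ are the convergents of $\alpha=[a_0;a_1,\dots]$; $\|y\|$ is distance to nearest integer. $V_k(x)=\sum_{n=1}^{q_k-1} \sin (\pi n \| q_k \alpha \| /q_k) \cot \left( \pi \frac{n(-1)^k p_k+x}{q_k} \right)$. *)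

theory Defs
  imports "HOL-Analysis.Analysis"
begin

definition Pprod :: "nat \<Rightarrow> real \<Rightarrow> real \<Rightarrow> real" where
  "Pprod N \<beta> x = (\<Prod>n\<in>{1..N}. \<bar>2 * sin (pi * (real n * \<beta> + x))\<bar>)"

definition dist_int :: "real \<Rightarrow> real" where
  "dist_int y = min (frac y) (1 - frac y)"

fun cf_rem :: "real \<Rightarrow> nat \<Rightarrow> real" where
  "cf_rem \<alpha> 0 = \<alpha>"
| "cf_rem \<alpha> (Suc k) = 1 / frac (cf_rem \<alpha> k)"

definition cf_a :: "real \<Rightarrow> nat \<Rightarrow> int" where
  "cf_a \<alpha> k = \<lfloor>cf_rem \<alpha> k\<rfloor>"

text \<open>Convergents p_k/q_k: p_{-1}=1, q_{-1}=0, p_0=a_0, q_0=1,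
  p_k = a_k p_{k-1} + p_{k-2}, q_k = a_k q_{k-1} + q_{k-2}.\<close>
fun conv_p :: "real \<Rightarrow> nat \<Rightarrow> int" where
  "conv_p \<alpha> 0 = cf_a \<alpha> 0"
| "conv_p \<alpha> (Suc 0) = cf_a \<alpha> 1 * cf_a \<alpha> 0 + 1"
| "conv_p \<alpha> (Suc (Suc k)) = cf_a \<alpha> (Suc (Suc k)) * conv_p \<alpha> (Suc k) + conv_p \<alpha> k"

fun conv_q :: "real \<Rightarrow> nat \<Rightarrow> int" where
  "conv_q \<alpha> 0 = 1"
| "conv_q \<alpha> (Suc 0) = cf_a \<alpha> 1"
| "conv_q \<alpha> (Suc (Suc k)) = cf_a \<alpha> (Suc (Suc k)) * conv_q \<alpha> (Suc k) + conv_q \<alpha> k"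

definition Vk :: "real \<Rightarrow> nat \<Rightarrow> real \<Rightarrow> real" where
  "Vk \<alpha> k x = (let p = conv_p \<alpha> k; q = conv_q \<alpha> k in
     (\<Sum>n\<in>{1..<nat q}. sin (pi * real n * dist_int (real_of_int q * \<alpha>) / real_of_int q)
        * cot (pi * (real n * (-1)^k * real_of_int p + x) / real_of_int q)))"

definition Bkm :: "real \<Rightarrow> nat \<Rightarrow> nat \<Rightarrow> real \<Rightarrow> real" where
  "Bkm \<alpha> k M x = (let p = conv_p \<alpha> k; q = conv_q \<alpha> k in
     ln (Pprod M \<alpha> ((-1)^k * x / real_of_int q)
         / Pprod M (real_of_int p / real_of_int q) ((-1)^k * x / real_of_int q))
     - (\<Sum>n\<in>{1..M}. sin (pi * real n * dist_int (real_of_int q * \<alpha>) / real_of_int q)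
        * cot (pi * (real n * (-1)^k * real_of_int p + x) / real_of_int q)))"

definition sin_ratio :: "real \<Rightarrow> real \<Rightarrow> real" where
  "sin_ratio q x = (if x / q \<in> \<int> then q else \<bar>sin (pi * x)\<bar> / \<bar>sin (pi * x / q)\<bar>)"

end

theory Submission
  imports Defs "HOL-Computational_Algebra.Polynomial" "HOL-Number_Theory.Modular_Inverse"
begin

text \<open>
  Write q = q_k, p = p_k and y = (-1)^k x / q. The last factor of P_q(alpha, y) is
  |2 sin(pi (q alpha + y))|, and since q alpha = p + (-1)^k ||q alpha|| it equals
  |2 sin(pi (||q alpha|| + x/q))|. By definition V_k + B_{k,q-1} is the logarithm of
  P_{q-1}(alpha, y) / P_{q-1}(p/q, y), so it remains to evaluate the rational product.
  As p is coprime to q, the points n p / q (1 <= n < q) run modulo 1 through all j / q, and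
  with w = e(x/q) the product becomes prod_{j=1}^{q-1} |1 - w e(j/q)| = |1 + w + ... + w^(q-1)|,
  which is |sin(pi x)| / |sin(pi x/q)|, or q when w = 1.
\<close>

section \<open>Roots of unity and products of sines\<close>

definition unity_root :: "nat \<Rightarrow> nat \<Rightarrow> complex" where
  "unity_root n j = cis (2 * pi * real j / real n)"

lemma inj_on_unity_root: "n > 0 \<Longrightarrow> inj_on (unity_root n) {..<n}"
  using Complex.bij_betw_roots_unity[of n] unfolding unity_root_def bij_betw_def by blast

lemma unity_root_pow: "unity_root n j ^ n = 1"
proof (cases "n = 0")
  case False
  then have "unity_root n j ^ n = cis (2 * pi * real j)"
    unfolding unity_root_def Complex.DeMoivre by simp
  then show ?thesis by (metis cis_multiple_2pi Ints_of_nat mult.assoc)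
qed simp

lemma unity_root_neq_1:
  assumes "0 < j" "j < n"
  shows "unity_root n j \<noteq> 1"
proof
  assume "unity_root n j = 1"
  then have "unity_root n j = unity_root n 0" by (simp add: unity_root_def)
  with inj_on_unity_root[of n] assms show False by (auto dest: inj_onD)
qed

lemma prod_minus_unity_roots:
  assumes n: "n > 0"
  shows "(\<Prod>j\<in>{1..<n}. z - unity_root n j) = (\<Sum>i<n. z ^ i)"
proof -
  define P where "P = (\<Prod>j\<in>{1..<n}. [:- unity_root n j, 1:])"
  define S where "S = (\<Sum>i<n. monom (1::complex) i)"
  have poly_P: "poly P z = (\<Prod>j\<in>{1..<n}. z - unity_root n j)" for z
    unfolding P_def by (simp add: poly_prod)
  have poly_S: "poly S z = (\<Sum>i<n. z ^ i)" for z
    unfolding S_def by (simp add: poly_sum poly_monom)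
  have degree_P: "degree P = n - 1"
    unfolding P_def by (subst degree_prod_eq_sum_degree) auto
  have coeff_S: "coeff S i = (if i < n then 1 else 0)" for i
    unfolding S_def coeff_sum by (simp add: coeff_monom)
  have "P = S"
  proof (rule poly_eqI_degree_lead_coeff[where n = "n - 1" and A = "unity_root n ` {1..<n}"])
    have "lead_coeff P = 1" unfolding P_def lead_coeff_prod by simp
    then show "coeff P (n - 1) = coeff S (n - 1)" using degree_P coeff_S n by simp
    have "inj_on (unity_root n) {1..<n}"
      using inj_on_unity_root[OF n] by (rule inj_on_subset) auto
    then show "n - 1 \<le> card (unity_root n ` {1..<n})" by (simp add: card_image)
    show "degree P \<le> n - 1" using degree_P by simp
    show "degree S \<le> n - 1" by (rule degree_le) (auto simp: coeff_S)
    fix w assume "w \<in> unity_root n ` {1..<n}"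
    then obtain j where j: "1 \<le> j" "j < n" "w = unity_root n j" by auto
    then have "poly P w = 0" unfolding poly_P by (intro prod_zero) auto
    moreover have "poly S w = 0"
      using j unity_root_neq_1 unity_root_pow by (simp add: poly_S geometric_sum)
    ultimately show "poly P w = poly S w" by simp
  qed
  then show ?thesis using poly_P poly_S by metis
qed

lemma prod_one_minus_unity_roots:
  assumes n: "n > 0"
  shows "(\<Prod>j\<in>{1..<n}. 1 - w * unity_root n j) = (\<Sum>i<n. w ^ i)"
proof (cases "w = 0")
  case True
  then show ?thesis using n by (simp add: power_0_left sum.delta sum.delta')
next
  case False
  have "(\<Prod>j\<in>{1..<n}. 1 - w * unity_root n j) = (\<Prod>j\<in>{1..<n}. w * (inverse w - unity_root n j))"
    using False by (intro prod.cong) (auto simp: field_simps)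
  also have "\<dots> = w ^ (n - 1) * (\<Sum>i<n. inverse w ^ i)"
    by (simp add: prod.distrib prod_minus_unity_roots[OF n] del: One_nat_def)
  also have "\<dots> = (\<Sum>i<n. w ^ (n - Suc i))"
    unfolding sum_distrib_left
  proof (intro sum.cong refl)
    fix i assume "i \<in> {..<n}"
    then have "n - 1 = (n - Suc i) + i" by auto
    then show "w ^ (n - 1) * inverse w ^ i = w ^ (n - Suc i)"
      using False by (simp add: power_add power_inverse field_simps)
  qed
  also have "\<dots> = (\<Sum>i<n. w ^ i)" by (rule sum.nat_diff_reindex)
  finally show ?thesis .
qed

lemma norm_one_minus_cis: "cmod (1 - cis t) = \<bar>2 * sin (t / 2)\<bar>"
proof -
  have "(cmod (1 - cis t))\<^sup>2 = (1 - cos t)\<^sup>2 + (sin t)\<^sup>2"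
    by (simp add: cmod_power2)
  also have "\<dots> = 2 - 2 * cos t"
    using sin_cos_squared_add[of t] by (simp add: power2_eq_square algebra_simps)
  also have "\<dots> = (2 * sin (t / 2))\<^sup>2"
    using cos_double_sin[of "t / 2"] by (simp add: power2_eq_square)
  finally show ?thesis by (metis norm_ge_zero real_sqrt_abs real_sqrt_unique)
qed

lemma abs_sin_pi_add_int:
  assumes "m \<in> \<int>"
  shows "\<bar>sin (pi * (m + t))\<bar> = \<bar>sin (pi * t)\<bar>"
proof -
  from assms obtain i :: int where "m = of_int i" by (auto elim: Ints_cases)
  then show ?thesis by (simp add: distrib_left sin_add abs_mult)
qed

lemma cis_2pi_eq_1_iff: "cis (2 * pi * y) = 1 \<longleftrightarrow> y \<in> \<int>"
proof
  assume "cis (2 * pi * y) = 1"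
  then have "cos (2 * pi * y) = 1" by (metis cis.sel(1) one_complex.sel(1))
  then obtain i :: int where "2 * pi * y = i * 2 * pi" by (auto simp: cos_one_2pi_int)
  then show "y \<in> \<int>" by simp
qed simp

lemma prod_abs_two_sin_unity_shift:
  assumes n: "n > 0"
  shows "(\<Prod>j\<in>{1..<n}. \<bar>2 * sin (pi * (real j / real n + x / real n))\<bar>) = sin_ratio (real n) x"
proof -
  define w where "w = cis (2 * pi * (x / real n))"
  have "(\<Prod>j\<in>{1..<n}. \<bar>2 * sin (pi * (real j / real n + x / real n))\<bar>)
      = (\<Prod>j\<in>{1..<n}. cmod (1 - w * unity_root n j))"
  proof (intro prod.cong refl)
    fix j
    have "w * unity_root n j = cis (2 * pi * (real j / real n + x / real n))"
      unfolding w_def unity_root_def cis_mult by (simp add: algebra_simps)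
    then show "\<bar>2 * sin (pi * (real j / real n + x / real n))\<bar> = cmod (1 - w * unity_root n j)"
      by (simp add: norm_one_minus_cis)
  qed
  also have "\<dots> = cmod (\<Sum>i<n. w ^ i)"
    unfolding prod_norm prod_one_minus_unity_roots[OF n] ..
  also have "\<dots> = sin_ratio (real n) x"
  proof (cases "x / real n \<in> \<int>")
    case True
    then have "w = 1" unfolding w_def cis_2pi_eq_1_iff .
    then show ?thesis using True by (simp add: sin_ratio_def)
  next
    case False
    then have w: "w \<noteq> 1" unfolding w_def cis_2pi_eq_1_iff .
    have "w ^ n = cis (2 * pi * x)"
      unfolding w_def Complex.DeMoivre using n by simp
    then have "cmod (\<Sum>i<n. w ^ i) = cmod (1 - cis (2 * pi * x)) / cmod (1 - w)"
      using w by (simp add: geometric_sum norm_divide norm_minus_commute)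
    also have "\<dots> = \<bar>sin (pi * x)\<bar> / \<bar>sin (pi * x / real n)\<bar>"
      unfolding w_def norm_one_minus_cis by (simp add: abs_mult)
    finally show ?thesis using False by (simp add: sin_ratio_def)
  qed
  finally show ?thesis .
qed

lemma prod_periodic_coprime_multiples:
  fixes g :: "real \<Rightarrow> 'a :: comm_monoid_mult" and p :: int
  assumes coprime: "coprime p (int n)" and periodic: "\<And>m t. m \<in> \<int> \<Longrightarrow> g (m + t) = g t"
  shows "(\<Prod>j\<in>{1..<n}. g (real j * of_int p / real n)) = (\<Prod>j\<in>{1..<n}. g (real j / real n))"
proof -
  have int_reindex: "(\<Prod>j\<in>{1..<n}. h (int j)) = (\<Prod>m\<in>{1..<int n}. h m)" for h :: "int \<Rightarrow> 'a"
  proof -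
    have "(\<Prod>m\<in>{1..<int n}. h m) = (\<Prod>m\<in>int ` {1..<n}. h m)"
      by (simp add: image_int_atLeastLessThan)
    then show ?thesis by (simp add: prod.reindex)
  qed
  have "(\<Prod>j\<in>{1..<n}. g (real j * of_int p / real n))
      = (\<Prod>m\<in>{1..<int n}. g (of_int m * of_int p / real n))"
    using int_reindex[of "\<lambda>m. g (of_int m * of_int p / real n)"] by simp
  also have "\<dots> = (\<Prod>m\<in>{1..<int n}. g (of_int (p * m mod int n) / real n))"
  proof (intro prod.cong refl)
    fix m assume "m \<in> {1..<int n}"
    then have "real n > 0" by simp
    have "real_of_int (p * m) = real n * of_int (p * m div int n) + of_int (p * m mod int n)"
      by (metis mult_div_mod_eq of_int_add of_int_mult of_int_of_nat_eq)
    then have "of_int m * of_int p / real n = of_int (p * m div int n) + of_int (p * m mod int n) / real n"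
      using \<open>real n > 0\<close> by (simp add: field_simps)
    then show "g (of_int m * of_int p / real n) = g (of_int (p * m mod int n) / real n)"
      by (simp add: periodic)
  qed
  also have "\<dots> = (\<Prod>m\<in>{1..<int n}. g (of_int m / real n))"
    using prod.reindex_bij_betw[OF bij_betw_int_remainders_mult[OF coprime],
      of "\<lambda>m. g (of_int m / real n)"] by simp
  also have "\<dots> = (\<Prod>j\<in>{1..<n}. g (real j / real n))"
    unfolding int_reindex[of "\<lambda>m. g (of_int m / real n)", symmetric] by simp
  finally show ?thesis .
qed

lemma Pprod_Suc: "Pprod (Suc N) \<beta> y = Pprod N \<beta> y * \<bar>2 * sin (pi * (real (Suc N) * \<beta> + y))\<bar>"
  by (simp add: Pprod_def)

lemma Pprod_nonneg: "Pprod N \<beta> y \<ge> 0"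
  by (simp add: Pprod_def prod_nonneg)

lemma Pprod_neg_one_power: "Pprod N ((-1) ^ k * \<beta>) ((-1) ^ k * y) = Pprod N \<beta> y"
proof (cases "even k")
  case False
  have "pi * (real n * - \<beta> + - y) = - (pi * (real n * \<beta> + y))" for n
    by (simp add: algebra_simps)
  then show ?thesis using False unfolding Pprod_def by (simp del: mult_minus_right)
qed simp

lemma Pprod_coprime_fraction:
  fixes p :: int
  assumes n: "n > 0" and coprime: "coprime p (int n)"
  shows "Pprod (n - 1) (of_int p / real n) (x / real n) = sin_ratio (real n) x"
proof -
  have "Pprod (n - 1) (of_int p / real n) (x / real n)
      = (\<Prod>j\<in>{1..<n}. \<bar>2 * sin (pi * (real j * of_int p / real n + x / real n))\<bar>)"
    unfolding Pprod_def using n by (intro prod.cong) auto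
  also have "\<dots> = (\<Prod>j\<in>{1..<n}. \<bar>2 * sin (pi * (real j / real n + x / real n))\<bar>)"
    by (rule prod_periodic_coprime_multiples[OF coprime, where g = "\<lambda>t. \<bar>2 * sin (pi * (t + x / real n))\<bar>"])
       (simp add: abs_mult add.assoc abs_sin_pi_add_int)
  also have "\<dots> = sin_ratio (real n) x"
    by (rule prod_abs_two_sin_unity_shift[OF n])
  finally show ?thesis .
qed

section \<open>Convergents of continued fractions\<close>

fun prev_conv_p :: "real \<Rightarrow> nat \<Rightarrow> int" where
  "prev_conv_p \<alpha> 0 = 1"
| "prev_conv_p \<alpha> (Suc k) = conv_p \<alpha> k"

fun prev_conv_q :: "real \<Rightarrow> nat \<Rightarrow> int" where
  "prev_conv_q \<alpha> 0 = 0"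
| "prev_conv_q \<alpha> (Suc k) = conv_q \<alpha> k"

lemma conv_p_Suc: "conv_p \<alpha> (Suc k) = cf_a \<alpha> (Suc k) * conv_p \<alpha> k + prev_conv_p \<alpha> k"
  by (cases k) auto

lemma conv_q_Suc: "conv_q \<alpha> (Suc k) = cf_a \<alpha> (Suc k) * conv_q \<alpha> k + prev_conv_q \<alpha> k"
  by (cases k) auto

lemma cf_rem_notin_Rats: "\<alpha> \<notin> \<rat> \<Longrightarrow> cf_rem \<alpha> k \<notin> \<rat>"
proof (induction k)
  case (Suc k)
  show ?case
  proof
    assume "cf_rem \<alpha> (Suc k) \<in> \<rat>"
    then have "frac (cf_rem \<alpha> k) \<in> \<rat>"
      using Rats_divide[OF Rats_1] by fastforce
    then have "frac (cf_rem \<alpha> k) + of_int \<lfloor>cf_rem \<alpha> k\<rfloor> \<in> \<rat>" by simp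
    with Suc show False by (simp add: frac_def)
  qed
qed simp

lemma frac_cf_rem_pos: "\<alpha> \<notin> \<rat> \<Longrightarrow> frac (cf_rem \<alpha> k) > 0"
proof -
  assume "\<alpha> \<notin> \<rat>"
  then have "cf_rem \<alpha> k \<notin> \<int>"
    using cf_rem_notin_Rats Ints_subset_Rats by blast
  then show ?thesis using frac_ge_0[of "cf_rem \<alpha> k"] by (simp add: frac_eq_0_iff order_le_less)
qed

lemma cf_rem_Suc_gt_1: "\<alpha> \<notin> \<rat> \<Longrightarrow> cf_rem \<alpha> (Suc k) > 1"
  using frac_cf_rem_pos[of \<alpha> k] frac_lt_1[of "cf_rem \<alpha> k"] by (simp add: field_simps)

lemma cf_a_Suc_ge_1: "\<alpha> \<notin> \<rat> \<Longrightarrow> cf_a \<alpha> (Suc k) \<ge> 1"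
  using cf_rem_Suc_gt_1[of \<alpha> k] unfolding cf_a_def by (simp add: le_floor_iff)

lemma cf_rem_eq_cf_a_plus: "\<alpha> \<notin> \<rat> \<Longrightarrow> cf_rem \<alpha> k = cf_a \<alpha> k + 1 / cf_rem \<alpha> (Suc k)"
  using frac_cf_rem_pos[of \<alpha> k] unfolding cf_a_def by (simp add: frac_def)

lemma conv_q_ge_1: "\<alpha> \<notin> \<rat> \<Longrightarrow> conv_q \<alpha> k \<ge> 1"
proof (induction \<alpha> k rule: conv_q.induct)
  case (2 \<alpha>)
  then show ?case using cf_a_Suc_ge_1[of \<alpha> 0] by simp
next
  case (3 \<alpha> k)
  then have "cf_a \<alpha> (Suc (Suc k)) * conv_q \<alpha> (Suc k) \<ge> 1 * 1"
    using cf_a_Suc_ge_1[of \<alpha> "Suc k"] by (intro mult_mono) auto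
  with 3 show ?case by simp
qed simp

lemma prev_conv_q_nonneg: "\<alpha> \<notin> \<rat> \<Longrightarrow> prev_conv_q \<alpha> k \<ge> 0"
  using conv_q_ge_1[of \<alpha> "k - 1"] by (cases k) auto

lemma conv_det: "conv_p \<alpha> k * prev_conv_q \<alpha> k - prev_conv_p \<alpha> k * conv_q \<alpha> k = (-1) ^ Suc k"
proof (induction k)
  case (Suc k)
  have "conv_p \<alpha> (Suc k) * prev_conv_q \<alpha> (Suc k) - prev_conv_p \<alpha> (Suc k) * conv_q \<alpha> (Suc k)
      = - (conv_p \<alpha> k * prev_conv_q \<alpha> k - prev_conv_p \<alpha> k * conv_q \<alpha> k)"
    unfolding conv_p_Suc conv_q_Suc prev_conv_p.simps prev_conv_q.simps by (simp add: algebra_simps)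
  with Suc show ?case by simp
qed simp

lemma coprime_conv: "coprime (conv_p \<alpha> k) (conv_q \<alpha> k)"
proof (rule coprimeI)
  fix c assume "c dvd conv_p \<alpha> k" "c dvd conv_q \<alpha> k"
  then have "c dvd conv_p \<alpha> k * prev_conv_q \<alpha> k - prev_conv_p \<alpha> k * conv_q \<alpha> k"
    by (simp add: dvd_diff)
  then have "c dvd (-1) ^ Suc k" unfolding conv_det .
  moreover have "is_unit ((-1 :: int) ^ Suc k)" by simp
  ultimately show "is_unit c" by (rule dvd_unit_imp_unit)
qed

lemma conv_q_mult_cf_rem_gt_1:
  assumes irr: "\<alpha> \<notin> \<rat>"
  shows "real_of_int (conv_q \<alpha> k) * cf_rem \<alpha> (Suc k) > 1"
proof -
  have "1 * 1 < real_of_int (conv_q \<alpha> k) * cf_rem \<alpha> (Suc k)"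
    using conv_q_ge_1[OF irr, of k] cf_rem_Suc_gt_1[OF irr, of k]
    by (intro mult_le_less_imp_less) simp_all
  then show ?thesis by simp
qed

lemma alpha_eq_complete_quotient:
  fixes \<alpha> :: real
  assumes irr: "\<alpha> \<notin> \<rat>"
  shows "\<alpha> * (conv_q \<alpha> k * cf_rem \<alpha> (Suc k) + prev_conv_q \<alpha> k)
       = conv_p \<alpha> k * cf_rem \<alpha> (Suc k) + prev_conv_p \<alpha> k"
proof (induction k)
  case 0
  have "\<alpha> = cf_a \<alpha> 0 + frac \<alpha>" by (simp add: cf_a_def frac_def)
  then show ?case using frac_cf_rem_pos[OF irr, of 0] by (simp add: field_simps)
next
  case (Suc k)
  define r where "r = cf_rem \<alpha> (Suc (Suc k))"
  define s where "s = cf_rem \<alpha> (Suc k)"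
  define a where "a = real_of_int (cf_a \<alpha> (Suc k))"
  have "r > 1" unfolding r_def using cf_rem_Suc_gt_1[OF irr] .
  have s_eq: "s = a + 1 / r"
    unfolding s_def a_def r_def by (rule cf_rem_eq_cf_a_plus[OF irr])
  have q: "conv_q \<alpha> (Suc k) * r + prev_conv_q \<alpha> (Suc k) = r * (conv_q \<alpha> k * s + prev_conv_q \<alpha> k)"
    and p: "conv_p \<alpha> (Suc k) * r + prev_conv_p \<alpha> (Suc k) = r * (conv_p \<alpha> k * s + prev_conv_p \<alpha> k)"
    using \<open>r > 1\<close> unfolding s_eq a_def by (simp_all add: conv_q_Suc conv_p_Suc field_simps)
  have "\<alpha> * (conv_q \<alpha> (Suc k) * r + prev_conv_q \<alpha> (Suc k)) = r * (\<alpha> * (conv_q \<alpha> k * s + prev_conv_q \<alpha> k))"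
    unfolding q by (simp only: mult.left_commute)
  also have "\<dots> = conv_p \<alpha> (Suc k) * r + prev_conv_p \<alpha> (Suc k)"
    unfolding p using Suc unfolding s_def by simp
  finally show ?case unfolding r_def .
qed

lemma conv_error:
  fixes \<alpha> :: real
  assumes irr: "\<alpha> \<notin> \<rat>"
  shows "real_of_int (conv_q \<alpha> k) * \<alpha> - conv_p \<alpha> k
       = (-1) ^ k / (conv_q \<alpha> k * cf_rem \<alpha> (Suc k) + prev_conv_q \<alpha> k)"
proof -
  define r where "r = cf_rem \<alpha> (Suc k)"
  define D where "D = conv_q \<alpha> k * r + prev_conv_q \<alpha> k"
  have "D > 0"
    unfolding D_def r_def using conv_q_mult_cf_rem_gt_1[OF irr, of k] prev_conv_q_nonneg[OF irr, of k]
    by linarith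
  have alpha_D: "\<alpha> * D = conv_p \<alpha> k * r + prev_conv_p \<alpha> k"
    unfolding D_def r_def by (rule alpha_eq_complete_quotient[OF irr])
  have "(conv_q \<alpha> k * \<alpha> - conv_p \<alpha> k) * D = conv_q \<alpha> k * (\<alpha> * D) - conv_p \<alpha> k * D"
    by (simp add: algebra_simps)
  also have "\<dots> = conv_q \<alpha> k * (conv_p \<alpha> k * r + prev_conv_p \<alpha> k) - conv_p \<alpha> k * (conv_q \<alpha> k * r + prev_conv_q \<alpha> k)"
    unfolding alpha_D by (simp only: D_def)
  also have "\<dots> = - of_int (conv_p \<alpha> k * prev_conv_q \<alpha> k - prev_conv_p \<alpha> k * conv_q \<alpha> k)"
    by (simp add: algebra_simps)
  also have "\<dots> = (-1) ^ k" unfolding conv_det by simp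
  finally have "(conv_q \<alpha> k * \<alpha> - conv_p \<alpha> k) * D = (-1) ^ k" .
  with \<open>D > 0\<close> show ?thesis unfolding r_def[symmetric] D_def[symmetric] by (simp add: eq_divide_eq)
qed

lemma dist_int_of_int_add: "\<bar>e\<bar> < 1/2 \<Longrightarrow> dist_int (of_int m + e) = \<bar>e\<bar>"
proof (cases "e \<ge> 0")
  case True
  assume "\<bar>e\<bar> < 1/2"
  with True show ?thesis by (simp add: dist_int_def frac_eq)
next
  case False
  assume "\<bar>e\<bar> < 1/2"
  with False have "\<lfloor>e\<rfloor> = -1" by (simp add: floor_eq_iff)
  then have "frac e = e + 1" by (simp add: frac_def)
  with False \<open>\<bar>e\<bar> < 1/2\<close> show ?thesis by (simp add: dist_int_def)
qed

lemma conv_error_eq_dist_int: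
  fixes \<alpha> :: real
  assumes irr: "\<alpha> \<notin> \<rat>" and k: "k \<ge> 1"
  shows "real_of_int (conv_q \<alpha> k) * \<alpha> - conv_p \<alpha> k = (-1) ^ k * dist_int (real_of_int (conv_q \<alpha> k) * \<alpha>)"
proof -
  define D where "D = conv_q \<alpha> k * cf_rem \<alpha> (Suc k) + prev_conv_q \<alpha> k"
  have "prev_conv_q \<alpha> k \<ge> 1" using k conv_q_ge_1[OF irr] by (cases k) auto
  then have "D > 2" unfolding D_def using conv_q_mult_cf_rem_gt_1[OF irr, of k] by linarith
  then have small: "\<bar>(-1) ^ k / D\<bar> = 1 / D" "1 / D < 1 / 2" by (simp_all add: abs_div field_simps)
  have err: "real_of_int (conv_q \<alpha> k) * \<alpha> - conv_p \<alpha> k = (-1) ^ k / D"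
    unfolding D_def by (rule conv_error[OF irr])
  then have "real_of_int (conv_q \<alpha> k) * \<alpha> = of_int (conv_p \<alpha> k) + (-1) ^ k / D" by linarith
  then have "dist_int (real_of_int (conv_q \<alpha> k) * \<alpha>) = dist_int (of_int (conv_p \<alpha> k) + (-1) ^ k / D)"
    by simp
  also have "\<dots> = 1 / D" using dist_int_of_int_add small by simp
  finally show ?thesis using err by simp
qed

lemma Vk_add_Bkm:
  "Vk \<alpha> k x + Bkm \<alpha> k (nat (conv_q \<alpha> k) - 1) x
   = ln (Pprod (nat (conv_q \<alpha> k) - 1) \<alpha> ((-1) ^ k * x / conv_q \<alpha> k)
         / Pprod (nat (conv_q \<alpha> k) - 1) (conv_p \<alpha> k / conv_q \<alpha> k) ((-1) ^ k * x / conv_q \<alpha> k))"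
proof -
  have "{1..<nat (conv_q \<alpha> k)} = {1..nat (conv_q \<alpha> k) - 1}" by auto
  then show ?thesis unfolding Vk_def Bkm_def Let_def by simp
qed

lemma abs_sin_neg_one_power: "\<bar>sin ((-1) ^ k * t)\<bar> = \<bar>sin t\<bar>" for t :: real
  by (cases "even k") (simp_all add: abs_minus_cancel)

lemma Pprod_conv_q_last_factor:
  fixes \<alpha> x :: real
  assumes irr: "\<alpha> \<notin> \<rat>" and k: "k \<ge> 1"
  shows "Pprod (nat (conv_q \<alpha> k)) \<alpha> ((-1) ^ k * x / conv_q \<alpha> k)
       = Pprod (nat (conv_q \<alpha> k) - 1) \<alpha> ((-1) ^ k * x / conv_q \<alpha> k)
         * \<bar>2 * sin (pi * (dist_int (conv_q \<alpha> k * \<alpha>) + x / conv_q \<alpha> k))\<bar>"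
proof -
  define q where "q = nat (conv_q \<alpha> k)"
  define y where "y = (-1) ^ k * x / real q"
  have q: "q > 0" "real q = conv_q \<alpha> k"
    using conv_q_ge_1[OF irr, of k] unfolding q_def by auto
  have "real q * \<alpha> + y = conv_p \<alpha> k + (-1) ^ k * (dist_int (real q * \<alpha>) + x / real q)"
    using conv_error_eq_dist_int[OF irr k] unfolding q(2) y_def by (simp add: algebra_simps)
  then have "\<bar>sin (pi * (real q * \<alpha> + y))\<bar> = \<bar>sin (pi * (dist_int (real q * \<alpha>) + x / real q))\<bar>"
    using abs_sin_pi_add_int[of "of_int (conv_p \<alpha> k)"] abs_sin_neg_one_power[of k]
    by (simp add: mult.left_commute[of pi])
  then have "Pprod q \<alpha> y = Pprod (q - 1) \<alpha> y * \<bar>2 * sin (pi * (dist_int (real q * \<alpha>) + x / real q))\<bar>"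
    using Pprod_Suc[of "q - 1" \<alpha> y] q(1) by (simp add: abs_mult)
  then show ?thesis unfolding y_def q(2) unfolding q_def .
qed

lemma Pprod_convergent_eq_sin_ratio:
  fixes \<alpha> x :: real
  assumes irr: "\<alpha> \<notin> \<rat>"
  shows "Pprod (nat (conv_q \<alpha> k) - 1) (conv_p \<alpha> k / conv_q \<alpha> k) ((-1) ^ k * x / conv_q \<alpha> k)
       = sin_ratio (conv_q \<alpha> k) x"
proof -
  define q where "q = nat (conv_q \<alpha> k)"
  define p where "p = conv_p \<alpha> k"
  have q: "q > 0" "real q = conv_q \<alpha> k" "int q = conv_q \<alpha> k"
    using conv_q_ge_1[OF irr, of k] unfolding q_def by auto
  have "coprime ((-1) ^ k * p) (int q)"
    using coprime_conv[of \<alpha> k] unfolding p_def q(3) by simp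
  then have "Pprod (q - 1) (p / real q) ((-1) ^ k * x / real q) = sin_ratio (real q) x"
    using Pprod_coprime_fraction[OF q(1), of "(-1) ^ k * p" x]
      Pprod_neg_one_power[of "q - 1" k "(-1) ^ k * p / real q" "x / real q"]
    by (simp add: mult.assoc[symmetric])
  then show ?thesis unfolding q(2) unfolding q_def p_def .
qed

theorem corollary1:
  fixes \<alpha> x :: real and k :: nat
  assumes irr: "\<alpha> \<notin> \<rat>"
    and k: "k \<ge> 1"
    and def1: "Pprod (nat (conv_q \<alpha> k)) \<alpha> ((-1)^k * x / real_of_int (conv_q \<alpha> k)) \<noteq> 0"
    and def2: "Pprod (nat (conv_q \<alpha> k) - 1) (real_of_int (conv_p \<alpha> k) / real_of_int (conv_q \<alpha> k))
                 ((-1)^k * x / real_of_int (conv_q \<alpha> k)) \<noteq> 0"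
  shows "ln (Pprod (nat (conv_q \<alpha> k)) \<alpha> ((-1)^k * x / real_of_int (conv_q \<alpha> k)))
       = ln (\<bar>2 * sin (pi * (dist_int (real_of_int (conv_q \<alpha> k) * \<alpha>) + x / real_of_int (conv_q \<alpha> k)))\<bar>
             * sin_ratio (real_of_int (conv_q \<alpha> k)) x)
         + Vk \<alpha> k x + Bkm \<alpha> k (nat (conv_q \<alpha> k) - 1) x"
proof -
  define P where "P = Pprod (nat (conv_q \<alpha> k) - 1) \<alpha> ((-1) ^ k * x / conv_q \<alpha> k)"
  define A where "A = \<bar>2 * sin (pi * (dist_int (conv_q \<alpha> k * \<alpha>) + x / conv_q \<alpha> k))\<bar>"
  define S where "S = sin_ratio (conv_q \<alpha> k) x"
  have last_factor: "Pprod (nat (conv_q \<alpha> k)) \<alpha> ((-1) ^ k * x / conv_q \<alpha> k) = P * A"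
    unfolding P_def A_def by (rule Pprod_conv_q_last_factor[OF irr k])
  have rational_part: "Pprod (nat (conv_q \<alpha> k) - 1) (conv_p \<alpha> k / conv_q \<alpha> k) ((-1) ^ k * x / conv_q \<alpha> k) = S"
    unfolding S_def by (rule Pprod_convergent_eq_sin_ratio[OF irr])
  have "S \<ge> 0"
    unfolding rational_part[symmetric] by (rule Pprod_nonneg)
  then have "S > 0"
    using def2 unfolding rational_part by simp
  moreover have "P > 0" "A > 0"
    using def1 Pprod_nonneg unfolding last_factor P_def A_def by (auto simp: less_le)
  moreover have "Vk \<alpha> k x + Bkm \<alpha> k (nat (conv_q \<alpha> k) - 1) x = ln (P / S)"
    unfolding Vk_add_Bkm rational_part P_def ..
  ultimately show ?thesis
    unfolding last_factor A_def[symmetric] S_def[symmetric] by (simp add: ln_mult ln_div)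
qed

end
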